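(* Let $\bar A\in\{0,1\}^{n\times n}$, $\bar S\in\{0,1\}^{n\times q}$, and let $\mathcal B(\bar A,\bar S)$, $\mathcal B(\bar A)$, $\mathcal B(\bar S)$ be as in the context. Define $$t=\max\{|F| : F \text{ a matching of } \mathcal B(\bar S),\ \mathcal R(F)\subseteq \mathcal U_R(M') \text{ for some maximum matching } M' \text{ of } \mathcal B(\bar A)\}.$$ Let $M^*$ be a maximum matching of $\mathcal B(\bar A,\bar S)$ and set $M_{\bar A}=M^*\cap\mathcal E_{\mathcal X,\mathcal X}$, $M_{\bar S}=M^*\cap\mathcal E_{\mathcal S,\mathcal X}$. Then $M^*=M_{\bar S}\cup M_{\bar A}$, $M_{\bar A}$ and $M_{\bar S}$ are disjoint matchings of $\mathcal B(\bar A)$ and $\mathcal B(\bar S)$ respectively, $\mathcal R(M_{\bar S})\subseteq\mathcal U_R(M_{\bar A})$, and $M_{\bar S}$ contains a largest collection of edges incoming into the set of right-unmatched vertices of some maximum matching of $\mathcal B(\bar A)$; that is, there exist a maximum matching $M'$ of $\mathcal B(\bar A)$ and a subset $E\subseteq M_{\bar S}$ with $\mathcal R(E)\subseteq\mathcal U_R(M')$ and $|E|=t$.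
   Context: State variables $\mathcal X=\{x_1,\dots,x_n\}$, slack variables $\mathcal S=\{s_1,\dots,s_q\}$. $\mathcal B(\bar A,\bar S)$ is the bipartite graph with left vertex set $\mathcal X\cup\mathcal S$, right vertex set $\mathcal X$ (left and right copies of $\mathcal X$ are distinct vertices), and edge set $\mathcal E_{\mathcal X,\mathcal X}\cup\mathcal E_{\mathcal S,\mathcal X}$, where $\mathcal E_{\mathcal X,\mathcal X}=\{(x_i,x_j):\bar A_{ji}\neq 0\}$ and $\mathcal E_{\mathcal S,\mathcal X}=\{(s_k,x_j):\bar S_{jk}\neq0\}$ (first endpoint left, second right). $\mathcal B(\bar A)$ is the subgraph with left vertices $\mathcal X$ and edges $\mathcal E_{\mathcal X,\mathcal X}$; $\mathcal B(\bar S)$ is the subgraph with left vertices $\mathcal S$ and edges $\mathcal E_{\mathcal S,\mathcal X}$; both have right vertex set $\mathcal X$. A matching is a set of edges no two sharing a left endpoint or a right endpoint; a maximum matching is one of largest cardinality. $\mathcal R(E)$ is the set of right endpoints of the edges in $E$. For a matching $M$, $\mathcal U_R(M)$ is the set of right vertices not covered by $M$. *)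

theory Defs
  imports Main
begin

(* Vertices: left vertices are  Inl i = x_i  (i < n)  and  Inr k = s_k  (k < q);
   right vertices are  j = x_j  (j < n).
   Matrices are given entrywise: A j i is the (j,i) entry of \<bar>A, S j k the (j,k) entry of \<bar>S. *)

type_synonym edge = "(nat + nat) \<times> nat"

definition E_XX :: "nat \<Rightarrow> (nat \<Rightarrow> nat \<Rightarrow> nat) \<Rightarrow> edge set" where
  "E_XX n A = {(Inl i, j) | i j. i < n \<and> j < n \<and> A j i \<noteq> 0}"

definition E_SX :: "nat \<Rightarrow> nat \<Rightarrow> (nat \<Rightarrow> nat \<Rightarrow> nat) \<Rightarrow> edge set" where
  "E_SX n q S = {(Inr k, j) | k j. k < q \<and> j < n \<and> S j k \<noteq> 0}"

definition is_matching :: "edge set \<Rightarrow> edge set \<Rightarrow> bool" where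
  "is_matching E M \<longleftrightarrow> M \<subseteq> E \<and>
     (\<forall>e\<in>M. \<forall>e'\<in>M. e \<noteq> e' \<longrightarrow> fst e \<noteq> fst e' \<and> snd e \<noteq> snd e')"

definition is_max_matching :: "edge set \<Rightarrow> edge set \<Rightarrow> bool" where
  "is_max_matching E M \<longleftrightarrow> is_matching E M \<and>
     (\<forall>M'. is_matching E M' \<longrightarrow> card M' \<le> card M)"

definition R_end :: "edge set \<Rightarrow> nat set" where
  "R_end E = snd ` E"

definition U_R :: "nat \<Rightarrow> edge set \<Rightarrow> nat set" where
  "U_R n M = {0..<n} - R_end M"

end

theory Submission
  imports Defs
begin

(* Split the maximum matching M* of B(A,S) into its state part MA and its
   slack part MS; these are matchings with disjoint right endpoints.  The key tool is the
   classical exchange property of bipartite matchings: every matching M can be enlarged to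
   a maximum matching M' that still covers all right vertices covered by M (proved by
   following an alternating path, formalised as an induction on |M - N|).
   Take such an M' for MA, and let E be the edges of MS ending outside R(M').
   Call F admissible if it is a matching of B(S) with R(F) \<subseteq> U_R(M'') for some maximum
   matching M'' of B(A); t is the largest size of an admissible F.
   (1) For every admissible F (with its M''), F \<union> M'' is a matching of B(A,S), so
       |F| + |M'| \<le> |M*|; hence t \<le> |M*| - |M'|.
   (2) The edges of MS not in E end in R(M') - R(MA), so |E| \<ge> |MS| - (|M'| - |MA|)
       = |M*| - |M'|.
   Thus E is admissible and |E| = t. *)

section \<open>Matchings of an arbitrary bipartite edge set\<close>

lemma matching_subset: "is_matching E M \<Longrightarrow> M \<subseteq> E"
  unfolding is_matching_def by blast

lemma matching_fst_unique: "is_matching E M \<Longrightarrow> (a, b) \<in> M \<Longrightarrow> (a, c) \<in> M \<Longrightarrow> b = c"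
  unfolding is_matching_def by force

lemma matching_mono: "is_matching E M \<Longrightarrow> M' \<subseteq> M \<Longrightarrow> is_matching E M'"
  unfolding is_matching_def by blast

lemma matching_restrict: "is_matching E M \<Longrightarrow> is_matching E' (M \<inter> E')"
  unfolding is_matching_def by blast

lemma finite_matching: "finite E \<Longrightarrow> is_matching E M \<Longrightarrow> finite M"
  using matching_subset finite_subset by blast

lemma matching_inj_on_snd: "is_matching E M \<Longrightarrow> inj_on snd M"
  unfolding is_matching_def by (intro inj_onI) blast

lemma card_right_ends: "is_matching E M \<Longrightarrow> card (snd ` M) = card M"
  by (simp add: card_image matching_inj_on_snd)

lemma matching_Un:
  assumes "is_matching E1 M1" "is_matching E2 M2"
    and "fst ` M1 \<inter> fst ` M2 = {}" "snd ` M1 \<inter> snd ` M2 = {}"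
  shows "is_matching (E1 \<union> E2) (M1 \<union> M2)"
  using assms unfolding is_matching_def by (auto simp: disjoint_iff)

lemma max_matching_card_le: "is_max_matching E M \<Longrightarrow> is_matching E M' \<Longrightarrow> card M' \<le> card M"
  unfolding is_max_matching_def by blast

lemma card_matching_le: "finite E \<Longrightarrow> is_matching E M \<Longrightarrow> card M \<le> card E"
  by (simp add: card_mono matching_subset)

lemma ex_max_matching:
  assumes "finite E"
  shows "\<exists>M. is_max_matching E M"
proof -
  have "is_matching E {}" unfolding is_matching_def by simp
  moreover have "\<forall>M. is_matching E M \<longrightarrow> card M < Suc (card E)"
    using card_matching_le[OF assms] by (simp add: le_imp_less_Suc)
  ultimately show ?thesis
    unfolding is_max_matching_def using Lattices_Big.ex_has_greatest_nat[of "is_matching E"] by blast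
qed

section \<open>The exchange property\<close>

lemma matching_edges_off_left:
  assumes "is_matching E N" "(u, w) \<in> N"
  shows "{e \<in> N. fst e \<noteq> u} = N - {(u, w)}"
proof (intro set_eqI iffI)
  fix e assume "e \<in> N - {(u, w)}"
  then show "e \<in> {e \<in> N. fst e \<noteq> u}"
    using matching_fst_unique[OF assms] by (cases e) auto
qed (use assms(2) in auto)

lemma right_ends_remove:
  assumes "is_matching E N" "(u, w) \<in> N"
  shows "snd ` (N - {(u, w)}) = snd ` N - {w}"
  using assms by (subst inj_on_image_set_diff[OF matching_inj_on_snd[OF assms(1)]]) auto

lemma matching_exchange:
  assumes "is_matching E N" "(u, v) \<in> E" "v \<notin> snd ` N"
  shows "is_matching E (insert (u, v) {e \<in> N. fst e \<noteq> u})"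
  using assms unfolding is_matching_def by (force simp: image_iff)

text \<open>The proof follows the alternating path starting at v, by induction on |M - N|.\<close>

lemma matching_improve:
  assumes "finite E" "is_matching E N" "is_matching E M" "v \<in> snd ` M - snd ` N"
  shows "\<exists>N'. is_matching E N' \<and> (card N < card N' \<or>
           (card N' = card N \<and> card (snd ` N \<inter> snd ` M) < card (snd ` N' \<inter> snd ` M)))"
  using assms(2,4)
proof (induction "card (M - N)" arbitrary: N v rule: less_induct)
  case less
  have finN: "finite N" and finM: "finite M"
    using finite_matching assms(1,3) less.prems(1) by blast+
  obtain u where uv: "(u, v) \<in> M" and vN: "v \<notin> snd ` N" using less.prems(2) by auto
  have uvN: "(u, v) \<notin> N" using vN by force
  define N1 where "N1 = insert (u, v) {e \<in> N. fst e \<noteq> u}"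
  have mN1: "is_matching E N1"
    unfolding N1_def using matching_exchange less.prems(1) uv vN matching_subset[OF assms(3)] by blast
  show ?case
  proof (cases "\<exists>w. (u, w) \<in> N")
    case False
    then have "N1 = insert (u, v) N" unfolding N1_def by force
    then have "card N1 = Suc (card N)" using finN uvN by simp
    then show ?thesis using mN1 by auto
  next
    case True
    then obtain w where uw: "(u, w) \<in> N" by blast
    have N1_eq: "N1 = insert (u, v) (N - {(u, w)})"
      unfolding N1_def matching_edges_off_left[OF less.prems(1) uw] ..
    have wv: "w \<noteq> v" using uw vN by force
    have card_N1: "card N1 = card N"
      using finN uvN by (simp add: N1_eq card.remove[OF finN uw])
    have snd_N1: "snd ` N1 = insert v (snd ` N - {w})"
      unfolding N1_eq by (simp add: right_ends_remove[OF less.prems(1) uw])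
    have vM: "v \<in> snd ` M" using uv by force
    show ?thesis
    proof (cases "w \<in> snd ` M")
      case False
      then have "snd ` N1 \<inter> snd ` M = insert v (snd ` N \<inter> snd ` M)" using snd_N1 vM by blast
      then have "card (snd ` N \<inter> snd ` M) < card (snd ` N1 \<inter> snd ` M)" using finN vN by simp
      then show ?thesis using mN1 card_N1 by auto
    next
      case True
      text \<open>w is covered by M, so the alternating path continues from w.\<close>
      have "(u, w) \<notin> M" using uv wv matching_fst_unique[OF assms(3)] by blast
      then have "M - N1 = (M - N) - {(u, v)}" unfolding N1_eq by blast
      then have shorter: "card (M - N1) < card (M - N)"
        using card_Diff1_less[of "M - N" "(u, v)"] uv uvN finM by simp
      have "w \<in> snd ` M - snd ` N1" using True snd_N1 wv by blast
      then obtain N' where N': "is_matching E N'" "card N1 < card N' \<or>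
           (card N' = card N1 \<and> card (snd ` N1 \<inter> snd ` M) < card (snd ` N' \<inter> snd ` M))"
        using less.hyps[OF shorter mN1] by blast
      have "snd ` N1 \<inter> snd ` M = insert v ((snd ` N \<inter> snd ` M) - {w})" using snd_N1 vM by blast
      moreover have "w \<in> snd ` N \<inter> snd ` M" using uw True by force
      ultimately have "card (snd ` N1 \<inter> snd ` M) = card (snd ` N \<inter> snd ` M)"
        using finN vN card.remove[of "snd ` N \<inter> snd ` M" w] by simp
      then show ?thesis using N' card_N1 by auto
    qed
  qed
qed

text \<open>Choose a maximum matching covering as many of them as
  possible; by the improvement lemma it covers all of them.\<close>

lemma max_matching_covering:
  assumes "finite E" "is_matching E M"
  shows "\<exists>N. is_max_matching E N \<and> snd ` M \<subseteq> snd ` N"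
proof -
  let ?overlap = "\<lambda>N. card (snd ` N \<inter> snd ` M)"
  have "\<forall>N. is_max_matching E N \<longrightarrow> ?overlap N < Suc (card (snd ` M))"
    using assms by (simp add: card_mono finite_matching le_imp_less_Suc)
  then obtain N where N: "is_max_matching E N"
    and best: "\<And>N'. is_max_matching E N' \<Longrightarrow> ?overlap N' \<le> ?overlap N"
    using ex_max_matching[OF assms(1)] Lattices_Big.ex_has_greatest_nat[of "is_max_matching E" _ ?overlap]
    by metis
  have "snd ` M \<subseteq> snd ` N"
  proof (rule ccontr)
    assume "\<not> snd ` M \<subseteq> snd ` N"
    then obtain v where "v \<in> snd ` M - snd ` N" by blast
    moreover have mN: "is_matching E N" using N unfolding is_max_matching_def by blast
    ultimately obtain N' where N': "is_matching E N'" "card N < card N' \<or>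
           (card N' = card N \<and> ?overlap N < ?overlap N')"
      using matching_improve[OF assms(1) _ assms(2)] by blast
    moreover have "card N' \<le> card N" using max_matching_card_le[OF N N'(1)] .
    ultimately have "card N' = card N" "?overlap N < ?overlap N'" by linarith+
    moreover have "is_max_matching E N'"
      using N N' \<open>card N' = card N\<close> unfolding is_max_matching_def by simp
    ultimately show False using best by fastforce
  qed
  then show ?thesis using N by blast
qed

section \<open>The graph B(A,S)\<close>

lemma finite_E_XX: "finite (E_XX n A)"
proof -
  have "E_XX n A \<subseteq> Inl ` {..<n} \<times> {..<n}" unfolding E_XX_def by auto
  then show ?thesis by (rule finite_subset) auto
qed

lemma finite_E_SX: "finite (E_SX n q S)"
proof -
  have "E_SX n q S \<subseteq> Inr ` {..<q} \<times> {..<n}" unfolding E_SX_def by auto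
  then show ?thesis by (rule finite_subset) auto
qed

lemma left_ends_disjoint:
  "X \<subseteq> E_XX n A \<Longrightarrow> Y \<subseteq> E_SX n q S \<Longrightarrow> fst ` X \<inter> fst ` Y = {}"
  unfolding E_XX_def E_SX_def by force

lemma edge_sets_disjoint: "E_XX n A \<inter> E_SX n q S = {}"
  using left_ends_disjoint[of "E_XX n A" n A "E_SX n q S" q S] by blast

lemma right_end_E_SX: "e \<in> E_SX n q S \<Longrightarrow> snd e < n"
  unfolding E_SX_def by auto

lemma R_end_subset_U_R:
  assumes "F \<subseteq> E_SX n q S"
  shows "R_end F \<subseteq> U_R n M \<longleftrightarrow> snd ` F \<inter> snd ` M = {}"
proof -
  have "snd ` F \<subseteq> {0..<n}" using assms right_end_E_SX by (auto intro!: image_subsetI)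
  then show ?thesis unfolding R_end_def U_R_def by blast
qed

lemma combined_matching:
  assumes "is_matching (E_SX n q S) F" "is_matching (E_XX n A) M" "R_end F \<subseteq> U_R n M"
  shows "is_matching (E_XX n A \<union> E_SX n q S) (F \<union> M)" "card (F \<union> M) = card F + card M"
proof -
  have "fst ` F \<inter> fst ` M = {}"
    using left_ends_disjoint[OF matching_subset[OF assms(2)] matching_subset[OF assms(1)]] by blast
  moreover have "snd ` F \<inter> snd ` M = {}"
    using R_end_subset_U_R matching_subset[OF assms(1)] assms(3) by blast
  ultimately show "is_matching (E_XX n A \<union> E_SX n q S) (F \<union> M)"
    using matching_Un[OF assms(1,2)] by (simp add: Un_commute)
  have "F \<inter> M = {}"
    using edge_sets_disjoint matching_subset[OF assms(1)] matching_subset[OF assms(2)] by blast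
  then show "card (F \<union> M) = card F + card M"
    using finite_matching[OF finite_E_SX assms(1)] finite_matching[OF finite_E_XX assms(2)]
    by (simp add: card_Un_disjoint)
qed

lemma admissible_card_bound:
  assumes Mmax: "is_max_matching (E_XX n A \<union> E_SX n q S) Mstar"
    and M': "is_max_matching (E_XX n A) M'"
    and F: "is_matching (E_SX n q S) F" and M'': "is_max_matching (E_XX n A) M''"
    and free: "R_end F \<subseteq> U_R n M''"
  shows "card F + card M' \<le> card Mstar"
proof -
  have mM'': "is_matching (E_XX n A) M''" using M'' unfolding is_max_matching_def by blast
  have "card M' = card M''"
    using M' M'' max_matching_card_le le_antisym unfolding is_max_matching_def by metis
  moreover have "card (F \<union> M'') \<le> card Mstar"
    using max_matching_card_le[OF Mmax combined_matching(1)[OF F mM'' free]] .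
  ultimately show ?thesis using combined_matching(2)[OF F mM'' free] by simp
qed

lemma matching_split:
  assumes M: "is_matching (E_XX n A \<union> E_SX n q S) M"
  shows "M = (M \<inter> E_SX n q S) \<union> (M \<inter> E_XX n A)"
    and "(M \<inter> E_XX n A) \<inter> (M \<inter> E_SX n q S) = {}"
    and "is_matching (E_XX n A) (M \<inter> E_XX n A)"
    and "is_matching (E_SX n q S) (M \<inter> E_SX n q S)"
    and "R_end (M \<inter> E_SX n q S) \<subseteq> U_R n (M \<inter> E_XX n A)"
proof -
  show "M = (M \<inter> E_SX n q S) \<union> (M \<inter> E_XX n A)" using matching_subset[OF M] by blast
  show "(M \<inter> E_XX n A) \<inter> (M \<inter> E_SX n q S) = {}" using edge_sets_disjoint by blast
  show "is_matching (E_XX n A) (M \<inter> E_XX n A)" "is_matching (E_SX n q S) (M \<inter> E_SX n q S)"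
    by (rule matching_restrict[OF M])+
  have "snd e \<noteq> snd e'" if "e \<in> M \<inter> E_SX n q S" "e' \<in> M \<inter> E_XX n A" for e e'
  proof -
    have "e \<noteq> e'" using that edge_sets_disjoint by blast
    then show ?thesis using M that unfolding is_matching_def by blast
  qed
  then have "snd ` (M \<inter> E_SX n q S) \<inter> snd ` (M \<inter> E_XX n A) = {}" by blast
  then show "R_end (M \<inter> E_SX n q S) \<subseteq> U_R n (M \<inter> E_XX n A)"
    using R_end_subset_U_R[of "M \<inter> E_SX n q S"] by blast
qed

text \<open>Lower bound (2): if the maximum state matching M' covers every right vertex covered by
  the state part MA of M*, then the slack edges of M* ending outside R(M') number at least
  |M*| - |M'|, because the remaining slack edges end in R(M') - R(MA).\<close>

lemma free_slack_edges_card: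
  assumes Mmax: "is_max_matching (E_XX n A \<union> E_SX n q S) Mstar"
    and M': "is_max_matching (E_XX n A) M'"
    and covers: "snd ` (Mstar \<inter> E_XX n A) \<subseteq> snd ` M'"
  shows "card Mstar \<le> card {e \<in> Mstar \<inter> E_SX n q S. snd e \<notin> snd ` M'} + card M'"
proof -
  let ?MA = "Mstar \<inter> E_XX n A" and ?MS = "Mstar \<inter> E_SX n q S"
  let ?E = "{e \<in> ?MS. snd e \<notin> snd ` M'}" and ?G = "{e \<in> ?MS. snd e \<in> snd ` M'}"
  have M: "is_matching (E_XX n A \<union> E_SX n q S) Mstar"
    and mM': "is_matching (E_XX n A) M'" using Mmax M' unfolding is_max_matching_def by blast+
  note split = matching_split[OF M]
  have finMA: "finite ?MA" and finMS: "finite ?MS"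
    using finite_matching[OF finite_E_XX split(3)] finite_matching[OF finite_E_SX split(4)] .
  have "snd ` ?MS \<inter> snd ` ?MA = {}"
    using R_end_subset_U_R[OF Int_lower2] split(5) by (rule iffD1)
  then have G_ends: "snd ` ?G \<subseteq> snd ` M' - snd ` ?MA" by blast
  have "?G \<subseteq> ?MS" by blast
  then have "card ?G = card (snd ` ?G)"
    using card_right_ends[OF matching_mono[OF split(4)]] by simp
  also have "\<dots> \<le> card (snd ` M' - snd ` ?MA)"
    using G_ends finite_matching[OF finite_E_XX mM'] by (intro card_mono) auto
  also have "\<dots> = card M' - card ?MA"
    using card_Diff_subset[OF finite_imageI[OF finMA] covers]
      card_right_ends[OF mM'] card_right_ends[OF split(3)] by simp
  finally have card_G: "card ?G \<le> card M' - card ?MA" .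
  have "card ?MS = card (?E \<union> ?G)" by (rule arg_cong[where f = card]) blast
  also have "\<dots> = card ?E + card ?G"
    by (rule card_Un_disjoint) (auto intro: finite_subset[OF _ finMS])
  finally have card_MS: "card ?MS = card ?E + card ?G" .
  have "card Mstar = card (?MS \<union> ?MA)" using split(1) by (rule arg_cong)
  also have "\<dots> = card ?MS + card ?MA"
    by (rule card_Un_disjoint) (use finMS finMA split(2) in auto)
  finally have card_Mstar: "card Mstar = card ?MS + card ?MA" .
  have "card ?MA \<le> card M'" using max_matching_card_le[OF M' split(3)] .
  then show ?thesis using card_G card_MS card_Mstar by linarith
qed

theorem lemma2:
  fixes n q :: nat and A S :: "nat \<Rightarrow> nat \<Rightarrow> nat" and Mstar :: "edge set"
  assumes A01: "\<forall>i<n. \<forall>j<n. A i j \<in> {0, 1}"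
    and S01: "\<forall>j<n. \<forall>k<q. S j k \<in> {0, 1}"
    and Mmax: "is_max_matching (E_XX n A \<union> E_SX n q S) Mstar"
  defines "t \<equiv> Max {card F | F. is_matching (E_SX n q S) F \<and>
                 (\<exists>M'. is_max_matching (E_XX n A) M' \<and> R_end F \<subseteq> U_R n M')}"
    and "MA \<equiv> Mstar \<inter> E_XX n A"
    and "MS \<equiv> Mstar \<inter> E_SX n q S"
  shows "Mstar = MS \<union> MA \<and> MA \<inter> MS = {} \<and>
         is_matching (E_XX n A) MA \<and> is_matching (E_SX n q S) MS \<and>
         R_end MS \<subseteq> U_R n MA \<and>
         (\<exists>M' E. is_max_matching (E_XX n A) M' \<and> E \<subseteq> MS \<and>
                  R_end E \<subseteq> U_R n M' \<and> card E = t)"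
proof -
  have M: "is_matching (E_XX n A \<union> E_SX n q S) Mstar"
    using Mmax unfolding is_max_matching_def by blast
  note split = matching_split[OF M, folded MA_def MS_def]
  obtain M' where M': "is_max_matching (E_XX n A) M'" and covers: "snd ` MA \<subseteq> snd ` M'"
    using max_matching_covering[OF finite_E_XX split(3)] by blast
  define E where "E = {e \<in> MS. snd e \<notin> snd ` M'}"
  have E_MS: "E \<subseteq> MS" unfolding E_def by blast
  have E_free: "R_end E \<subseteq> U_R n M'"
    using R_end_subset_U_R[of E] E_MS unfolding E_def MS_def by blast
  have E_match: "is_matching (E_SX n q S) E" using matching_mono[OF split(4) E_MS] .
  have E_large: "card Mstar \<le> card E + card M'"
    using free_slack_edges_card[OF Mmax M' covers[unfolded MA_def]] unfolding E_def MS_def .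
  let ?T = "{card F | F. is_matching (E_SX n q S) F \<and>
              (\<exists>M'. is_max_matching (E_XX n A) M' \<and> R_end F \<subseteq> U_R n M')}"
  have bound: "x \<le> card E" if "x \<in> ?T" for x
    using that admissible_card_bound[OF Mmax M'] E_large by fastforce
  have "card E \<in> ?T" using E_match M' E_free by blast
  moreover have "finite ?T" using bound by (meson finite_nat_set_iff_bounded_le)
  ultimately have "t = card E" unfolding t_def using bound by (intro Max_eqI) auto
  then show ?thesis using split M' E_MS E_free by blast
qed

end
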